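(* Let $\mathbf{A}\in\mathbb{R}^{m_1\times n}$ ($m_1\ge1$) with rows $\mathbf{a}_1,\dots,\mathbf{a}_{m_1}$, $\mathbf{b}\in\mathbb{R}^{m_1}$, $\mathbf{W}\in\mathbb{R}^{m_2\times n}$, $\mathbf{q}\in\mathbb{R}^{m_2}$, $\chi=\{\mathbf{x}:\mathbf{A}\mathbf{x}\ge\mathbf{b},\ \mathbf{W}\mathbf{x}\ge\mathbf{q}\}$, observations $\mathbf{x}^1,\dots,\mathbf{x}^K\in\mathbb{R}^n$, and a big-M constant $M>0$. For $p\in\{1,\dots,n\}$ let $\mathbf{IL}(p)$ be the mixed-integer problem in variables $\mathbf{v}\in\{0,1\}^{m_1}$, $\mathbf{z}\in\mathbb{R}^n$, $\mathbf{E}=[\epsilon^1,\dots,\epsilon^K]$: $$\min\ \mathscr{D}(\mathbf{E},\mathbf{A})\ \text{ s.t. }\ \mathbf{b}\le\mathbf{A}\mathbf{z}\le\mathbf{b}+M(\mathbf{1}-\mathbf{v}),\ \mathbf{W}\mathbf{z}\ge\mathbf{q},\ \mathbf{z}=\mathbf{x}^k-\epsilon^k\ \forall k,\ \textstyle\sum_{j=1}^{m_1}v_j=p.$$ If $\chi$ has an extreme point at which $n$ of the relevant constraints $\mathbf{a}_j\mathbf{x}\ge b_j$ are tight, then $\mathbf{IL}(p)$ is feasible for all $p\in\{1,\dots,n\}$.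
   Context: Rows of $\mathbf{A}\mathbf{x}\ge\mathbf{b}$ are the relevant constraints. $\mathscr{D}\ge0$ is a user-chosen nonnegative distance measure on $\mathbf{E}$ and $\mathbf{A}$. $M$ is a big-M constant taken sufficiently large that the upper bounds $\mathbf{A}\mathbf{z}\le\mathbf{b}+M$ for constraints with $v_j=0$ are not restrictive on $\chi$. *)

theory Defs
  imports "HOL-Analysis.Analysis"
begin

definition chi_set :: "real^'n^'m \<Rightarrow> real^'m \<Rightarrow> real^'n^'w \<Rightarrow> real^'w \<Rightarrow> (real^'n) set" where
  "chi_set A b W q = {x. (\<forall>j. (A *v x)$j \<ge> b$j) \<and> (\<forall>i. (W *v x)$i \<ge> q$i)}"

text \<open>Feasibility of IL(p): existence of v in {0,1}^m1, z, E = [eps^1..eps^K] satisfying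
  all constraints (the objective D(E,A) plays no role in feasibility).\<close>
definition IL_feasible ::
  "real^'n^'m \<Rightarrow> real^'m \<Rightarrow> real^'n^'w \<Rightarrow> real^'w \<Rightarrow> nat \<Rightarrow> (nat \<Rightarrow> real^'n) \<Rightarrow> real \<Rightarrow> nat \<Rightarrow> bool" where
  "IL_feasible A b W q K xs M p \<longleftrightarrow>
     (\<exists>(v::real^'m) (z::real^'n) (E::nat \<Rightarrow> real^'n).
        (\<forall>j. v$j \<in> {0,1}) \<and>
        (\<forall>j. b$j \<le> (A *v z)$j \<and> (A *v z)$j \<le> b$j + M * (1 - v$j)) \<and>
        (\<forall>i. (W *v z)$i \<ge> q$i) \<and>
        (\<forall>k\<in>{1..K}. z = xs k - E k) \<and>
        (\<Sum>j\<in>UNIV. v$j) = real p)"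

end

theory Submission
  imports Defs
begin

text \<open>A point \<open>z\<close> of \<open>\<chi>\<close> at which at least \<open>p\<close> relevant constraints are tight is itself
  a feasible \<open>z\<close> for \<open>IL(p)\<close>: set \<open>v\<^sub>j = 1\<close> on exactly \<open>p\<close> tight constraints (whose upper
  bound \<open>b\<^sub>j + M(1 - v\<^sub>j) = b\<^sub>j\<close> then holds with equality) and absorb the observations
  into the errors \<open>\<epsilon>\<^sup>k = x\<^sup>k - z\<close>.\<close>

lemma IL_feasible_if_tight_constraints:
  fixes A :: "real^'n^'m" and S :: "'m set"
  assumes z: "z \<in> chi_set A b W q"
    and tight: "\<forall>j\<in>S. (A *v z)$j = b$j"
    and card_S: "card S = p"
    and bigM: "\<forall>j. (A *v z)$j \<le> b$j + M"
  shows "IL_feasible A b W q K xs M p"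
proof -
  define v :: "real^'m" where "v = (\<chi> j. if j \<in> S then 1 else 0)"
  show ?thesis
    unfolding IL_feasible_def
  proof (intro exI[of _ v] exI[of _ z] exI[of _ "\<lambda>k. xs k - z"] conjI)
    show "\<forall>j. v$j \<in> {0,1}"
      by (simp add: v_def)
    show "\<forall>j. b$j \<le> (A *v z)$j \<and> (A *v z)$j \<le> b$j + M * (1 - v$j)"
      using z tight bigM by (auto simp: chi_set_def v_def)
    show "\<forall>i. (W *v z)$i \<ge> q$i"
      using z by (simp add: chi_set_def)
    show "\<forall>k\<in>{1..K}. z = xs k - (xs k - z)"
      by simp
    show "(\<Sum>j\<in>UNIV. v$j) = real p"
      using card_S by (simp add: v_def sum.If_cases)
  qed
qed

theorem proposition4:
  fixes A :: "real^'n^'m" and b :: "real^'m"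
    and W :: "real^'n^'w" and q :: "real^'w"
    and K :: nat and xs :: "nat \<Rightarrow> real^'n" and M :: real
  assumes M_pos: "M > 0"
    and bigM: "\<forall>x\<in>chi_set A b W q. \<forall>j. (A *v x)$j \<le> b$j + M"
    and extreme: "\<exists>x0. x0 extreme_point_of (chi_set A b W q) \<and>
        (\<exists>J. card J = CARD('n) \<and> (\<forall>j\<in>J. (A *v x0)$j = b$j))"
  shows "\<forall>p\<in>{1..CARD('n)}. IL_feasible A b W q K xs M p"
proof
  fix p assume p: "p \<in> {1..CARD('n)}"
  obtain x0 J where x0: "x0 extreme_point_of (chi_set A b W q)"
    and card_J: "card J = CARD('n)" and tight: "\<forall>j\<in>J. (A *v x0)$j = b$j"
    using extreme by blast
  have x0_in: "x0 \<in> chi_set A b W q"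
    using x0 by (simp add: extreme_point_of_def)
  obtain S where "S \<subseteq> J" "card S = p"
    using p card_J by (metis atLeastAtMost_iff obtain_subset_with_card_n)
  then show "IL_feasible A b W q K xs M p"
    using IL_feasible_if_tight_constraints[OF x0_in] tight bigM x0_in by blast
qed

end
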